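(* Assume $q\neq0$. For all integers $n,r,s$, $$h_{n+s}h_{n-r}-h_nh_{n-r+s}=Eq^{n-r}\left(v_{r+s}-q^sv_{r-s}\right).$$
   Context: Let $p,q,a,b$ be complex numbers with $q\neq 0$, and let $E=b^2-abp+a^2q$. The sequence $(v_n)$ is defined by $v_0=2$, $v_1=p$, $v_n=pv_{n-1}-qv_{n-2}$. The Horadam-Lucas sequence $(h_n)$ is defined by $h_0=2b-ap$, $h_1=bp-2aq$, $h_n=ph_{n-1}-qh_{n-2}$. Both are extended to all integer indices by $x_{n-2}=(px_{n-1}-x_n)/q$. *)

theory Defs
  imports Complex_Main
begin

fun rec_fwd :: "complex \<Rightarrow> complex \<Rightarrow> complex \<Rightarrow> complex \<Rightarrow> nat \<Rightarrow> complex" where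
  "rec_fwd p q x0 x1 0 = x0"
| "rec_fwd p q x0 x1 (Suc 0) = x1"
| "rec_fwd p q x0 x1 (Suc (Suc n)) = p * rec_fwd p q x0 x1 (Suc n) - q * rec_fwd p q x0 x1 n"

text \<open>Backward part: rec_bwd k = x_{-k}, via x_{n-2} = (p x_{n-1} - x_n)/q.\<close>
fun rec_bwd :: "complex \<Rightarrow> complex \<Rightarrow> complex \<Rightarrow> complex \<Rightarrow> nat \<Rightarrow> complex" where
  "rec_bwd p q x0 x1 0 = x0"
| "rec_bwd p q x0 x1 (Suc 0) = (p * x0 - x1) / q"
| "rec_bwd p q x0 x1 (Suc (Suc k)) = (p * rec_bwd p q x0 x1 (Suc k) - rec_bwd p q x0 x1 k) / q"

definition rec_seq :: "complex \<Rightarrow> complex \<Rightarrow> complex \<Rightarrow> complex \<Rightarrow> int \<Rightarrow> complex" where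
  "rec_seq p q x0 x1 n = (if n \<ge> 0 then rec_fwd p q x0 x1 (nat n) else rec_bwd p q x0 x1 (nat (- n)))"

definition lucasV :: "complex \<Rightarrow> complex \<Rightarrow> int \<Rightarrow> complex" where
  "lucasV p q = rec_seq p q 2 p"

definition horadamLucas :: "complex \<Rightarrow> complex \<Rightarrow> complex \<Rightarrow> complex \<Rightarrow> int \<Rightarrow> complex" where
  "horadamLucas p q a b = rec_seq p q (2 * b - a * p) (b * p - 2 * a * q)"

end

(* All sequences involved solve x (n + 2) = p x (n + 1) - q x n on the integers, and since q is
   nonzero a solution is determined by any two consecutive values; so an identity between
   solutions in one index only has to be checked at two points.  The Casoratian
   f (m + 1) g m - f m g (m + 1) of two solutions gets multiplied by q at each step, which gives,
   for every solution f, the Vajda-type identity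
     f (n + s) f (n - r) - f n f (n - r + s) = q^(n - r) (f (r + s) f 0 - f r f s).
   For f = h the bracket on the right equals E (v (r + s) - q^s v (r - s)): both sides solve the
   recurrence in s (the second term because s |-> q^s v (r - s) does), and they agree at s = 0
   and, by the same argument in r, at s = 1. *)

theory Submission
  imports Defs
begin

definition lin_rec :: "'a::comm_ring_1 \<Rightarrow> 'a \<Rightarrow> (int \<Rightarrow> 'a) \<Rightarrow> bool" where
  "lin_rec p q f \<longleftrightarrow> (\<forall>n. f (n + 2) = p * f (n + 1) - q * f n)"

lemma lin_recD: "lin_rec p q f \<Longrightarrow> f (n + 2) = p * f (n + 1) - q * f n"
  unfolding lin_rec_def by blast

lemma lin_rec_shift: "lin_rec p q f \<Longrightarrow> lin_rec p q (\<lambda>n. f (n + c))"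
  unfolding lin_rec_def by (metis add.commute add.left_commute)

lemma lin_rec_lincomb:
  assumes "lin_rec p q f" "lin_rec p q g"
  shows "lin_rec p q (\<lambda>n. x * f n - y * g n)"
  unfolding lin_rec_def
proof
  fix n
  show "x * f (n + 2) - y * g (n + 2)
      = p * (x * f (n + 1) - y * g (n + 1)) - q * (x * f n - y * g n)"
    unfolding lin_recD[OF assms(1)] lin_recD[OF assms(2)] by (simp add: algebra_simps)
qed

lemma lin_rec_reflect:
  fixes q :: "'a::field"
  assumes "q \<noteq> 0" "lin_rec p q f"
  shows "lin_rec p q (\<lambda>n. q powi n * f (c - n))"
  unfolding lin_rec_def
proof
  fix n
  have rec: "f (c - n) = p * f (c - (n + 1)) - q * f (c - (n + 2))"
    using lin_recD[OF assms(2), of "c - n - 2"] by (simp add: algebra_simps)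
  have powi: "q powi (n + 2) = q powi n * q\<^sup>2" "q powi (n + 1) = q powi n * q"
    using assms(1) by (simp_all add: power_int_add)
  show "q powi (n + 2) * f (c - (n + 2))
      = p * (q powi (n + 1) * f (c - (n + 1))) - q * (q powi n * f (c - n))"
    unfolding rec powi by (simp add: algebra_simps power2_eq_square)
qed

lemma lin_rec_eq_0:
  fixes q :: "'a::idom"
  assumes "q \<noteq> 0" "lin_rec p q f" "f 0 = 0" "f 1 = 0"
  shows "f n = 0"
proof -
  have "f n = 0 \<and> f (n + 1) = 0"
  proof (induction n rule: int_induct[where k = 0])
    case base
    show ?case using assms(3,4) by simp
  next
    case (step1 i)
    then show ?case using lin_recD[OF assms(2), of i] by (simp add: add.assoc)
  next
    case (step2 i)
    have "f (i + 1) = p * f i - q * f (i - 1)"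
      using lin_recD[OF assms(2), of "i - 1"] by (simp add: add.commute)
    moreover have "f i = 0" "f (i + 1) = 0" using step2 by simp_all
    ultimately have "q * f (i - 1) = 0" by simp
    with \<open>f i = 0\<close> assms(1) show ?case by simp
  qed
  then show ?thesis ..
qed

lemma lin_rec_unique:
  fixes q :: "'a::idom"
  assumes "q \<noteq> 0" "lin_rec p q f" "lin_rec p q g" "f k = g k" "f (k + 1) = g (k + 1)"
  shows "f = g"
proof
  fix n
  have "lin_rec p q (\<lambda>m. 1 * f (m + k) - 1 * g (m + k))"
    using assms(2,3) by (intro lin_rec_lincomb lin_rec_shift)
  then have "1 * f (n - k + k) - 1 * g (n - k + k) = 0"
    by (rule lin_rec_eq_0[OF assms(1)]) (use assms(4,5) in \<open>simp_all add: add.commute\<close>)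
  then show "f n = g n" by simp
qed

lemma powi_of_first_order_rec:
  fixes q :: "'a::field"
  assumes "q \<noteq> 0" "\<And>m. g (m + 1) = q * g m"
  shows "g n = q powi n * g 0"
proof (induction n rule: int_induct[where k = 0])
  case (step1 i)
  then show ?case using assms by (simp add: power_int_add_1')
next
  case (step2 i)
  have "g i = q * g (i - 1)" using assms(2)[of "i - 1"] by simp
  with step2 assms(1) show ?case by (simp add: power_int_diff field_simps)
qed simp

lemma lin_rec_casoratian:
  fixes q :: "'a::field"
  assumes "q \<noteq> 0" "lin_rec p q f" "lin_rec p q g"
  shows "f (m + 1) * g m - f m * g (m + 1) = q powi m * (f 1 * g 0 - f 0 * g 1)"
proof -
  have "f (m + 2) * g (m + 1) - f (m + 1) * g (m + 2)
      = q * (f (m + 1) * g m - f m * g (m + 1))" for m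
    unfolding lin_recD[OF assms(2)] lin_recD[OF assms(3)] by (simp add: algebra_simps)
  then show ?thesis
    using powi_of_first_order_rec[OF assms(1), of "\<lambda>m. f (m + 1) * g m - f m * g (m + 1)"]
    by (simp add: add.assoc)
qed

lemma lin_rec_vajda_1:
  fixes q :: "'a::field"
  assumes "q \<noteq> 0" "lin_rec p q f"
  shows "f (k + 1) * f m - f k * f (m + 1)
    = q powi m * (f (k - m + 1) * f 0 - f (k - m) * f 1)"
proof -
  \<comment> \<open>Both sides are written as combinations of shifts of f, so that \<open>lin_rec\<close> is
    discharged by the closure rules.\<close>
  have "(\<lambda>k. f m * f (k + 1) - f (m + 1) * f k)
      = (\<lambda>k. q powi m * f 0 * f (k + (1 - m)) - q powi m * f 1 * f (k + - m))"
  proof (rule lin_rec_unique[OF assms(1), where p = p and k = m])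
    have "f (m + 2) * f m - f (m + 1) * f (m + 1) = q powi m * (f 2 * f 0 - f 1 * f 1)"
      using lin_rec_casoratian[OF assms(1) lin_rec_shift[OF assms(2), of 1] assms(2), of m]
      by (simp add: add.assoc)
    then show "f m * f (m + 1 + 1) - f (m + 1) * f (m + 1)
        = q powi m * f 0 * f (m + 1 + (1 - m)) - q powi m * f 1 * f (m + 1 + - m)"
      by (simp add: algebra_simps)
  qed (intro lin_rec_lincomb lin_rec_shift assms(2) | simp)+
  from fun_cong[OF this, of k] show ?thesis by (simp add: algebra_simps)
qed

lemma lin_rec_vajda:
  fixes q :: "'a::field"
  assumes "q \<noteq> 0" "lin_rec p q f"
  shows "f (n + s) * f (n - r) - f n * f (n - r + s)
    = q powi (n - r) * (f (r + s) * f 0 - f r * f s)"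
proof -
  have "(\<lambda>s. f (n - r) * f (s + n) - f n * f (s + (n - r)))
      = (\<lambda>s. q powi (n - r) * f 0 * f (s + r) - q powi (n - r) * f r * f s)"
  proof (rule lin_rec_unique[OF assms(1), where p = p and k = 0])
    show "f (n - r) * f (0 + 1 + n) - f n * f (0 + 1 + (n - r))
        = q powi (n - r) * f 0 * f (0 + 1 + r) - q powi (n - r) * f r * f (0 + 1)"
      using lin_rec_vajda_1[OF assms, of n "n - r"] by (simp add: algebra_simps)
  qed (intro lin_rec_lincomb lin_rec_shift assms(2) | simp)+
  from fun_cong[OF this, of s] show ?thesis by (simp add: algebra_simps)
qed

lemma rec_seq_of_nat [simp]: "rec_seq p q x0 x1 (int k) = rec_fwd p q x0 x1 k"
  by (simp add: rec_seq_def)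

lemma rec_seq_minus_of_nat [simp]: "rec_seq p q x0 x1 (- int k) = rec_bwd p q x0 x1 k"
  unfolding rec_seq_def by (cases "k = 0") auto

lemma lin_rec_rec_seq:
  assumes "q \<noteq> 0"
  shows "lin_rec p q (rec_seq p q x0 x1)"
  unfolding lin_rec_def
proof
  fix n :: int
  consider k where "n = int k" | "n = - 1" | k where "n = - int k - 2"
  proof (cases "n \<ge> 0")
    case False
    then have "n = - 1 \<or> n = - int (nat (- n - 2)) - 2" by auto
    with that(2,3) show thesis by blast
  qed (metis nonneg_eq_int)
  then show "rec_seq p q x0 x1 (n + 2)
      = p * rec_seq p q x0 x1 (n + 1) - q * rec_seq p q x0 x1 n"
  proof cases
    case (1 k)
    then show ?thesis
      using rec_seq_of_nat[of p q x0 x1 "Suc (Suc k)"] rec_seq_of_nat[of p q x0 x1 "Suc k"]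
      by (simp add: add.commute)
  next
    case 2
    then show ?thesis using assms by (simp add: rec_seq_def field_simps)
  next
    case (3 k)
    have "n + 2 = - int k" "n + 1 = - int (Suc k)" "n = - int (Suc (Suc k))"
      using 3 by simp_all
    then have "rec_seq p q x0 x1 (n + 2) = rec_bwd p q x0 x1 k"
      "rec_seq p q x0 x1 (n + 1) = rec_bwd p q x0 x1 (Suc k)"
      "rec_seq p q x0 x1 n = rec_bwd p q x0 x1 (Suc (Suc k))"
      by (metis rec_seq_minus_of_nat)+
    then show ?thesis using assms by (simp add: field_simps)
  qed
qed

lemma lin_rec_lucasV: "q \<noteq> 0 \<Longrightarrow> lin_rec p q (lucasV p q)"
  unfolding lucasV_def by (rule lin_rec_rec_seq)

lemma lin_rec_horadamLucas: "q \<noteq> 0 \<Longrightarrow> lin_rec p q (horadamLucas p q a b)"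
  unfolding horadamLucas_def by (rule lin_rec_rec_seq)

lemma lucasV_initial: "lucasV p q 0 = 2" "lucasV p q 1 = p" "lucasV p q (- 1) = p / q"
  by (simp_all add: lucasV_def rec_seq_def)

lemma horadamLucas_initial:
  "horadamLucas p q a b 0 = 2 * b - a * p" "horadamLucas p q a b 1 = b * p - 2 * a * q"
  by (simp_all add: horadamLucas_def rec_seq_def)

lemma horadamLucas_vajda_base_1:
  assumes "q \<noteq> 0"
  shows "horadamLucas p q a b (j + 1) * horadamLucas p q a b 0
      - horadamLucas p q a b j * horadamLucas p q a b 1
    = (b\<^sup>2 - a * b * p + a\<^sup>2 * q) * (lucasV p q (j + 1) - q * lucasV p q (j - 1))"
proof -
  let ?h = "horadamLucas p q a b" and ?v = "lucasV p q" and ?E = "b\<^sup>2 - a * b * p + a\<^sup>2 * q"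
  have h: "lin_rec p q ?h" and v: "lin_rec p q ?v"
    using assms by (rule lin_rec_horadamLucas, rule lin_rec_lucasV)
  have "(\<lambda>j. ?h 0 * ?h (j + 1) - ?h 1 * ?h j)
      = (\<lambda>j. ?E * ?v (j + 1) - ?E * q * ?v (j + - 1))"
  proof (rule lin_rec_unique[OF assms, where p = p and k = 0])
    show "?h 0 * ?h (0 + 1 + 1) - ?h 1 * ?h (0 + 1)
        = ?E * ?v (0 + 1 + 1) - ?E * q * ?v (0 + 1 + - 1)"
    proof -
      have h2: "?h 2 = p * ?h 1 - q * ?h 0" and v2: "?v 2 = p * ?v 1 - q * ?v 0"
        using lin_recD[OF h, of 0] lin_recD[OF v, of 0] by simp_all
      show ?thesis
        by (simp add: h2 v2 lucasV_initial horadamLucas_initial algebra_simps power2_eq_square)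
    qed
  qed (intro lin_rec_lincomb lin_rec_shift h v
      | simp add: lucasV_initial horadamLucas_initial assms)+
  from fun_cong[OF this, of j] show ?thesis by (simp add: algebra_simps)
qed

lemma horadamLucas_vajda_base:
  assumes "q \<noteq> 0"
  shows "horadamLucas p q a b (r + s) * horadamLucas p q a b 0
      - horadamLucas p q a b r * horadamLucas p q a b s
    = (b\<^sup>2 - a * b * p + a\<^sup>2 * q) * (lucasV p q (r + s) - q powi s * lucasV p q (r - s))"
proof -
  let ?h = "horadamLucas p q a b" and ?v = "lucasV p q" and ?E = "b\<^sup>2 - a * b * p + a\<^sup>2 * q"
  have h: "lin_rec p q ?h" and v: "lin_rec p q ?v"
    using assms by (rule lin_rec_horadamLucas, rule lin_rec_lucasV)
  have "(\<lambda>s. ?h 0 * ?h (s + r) - ?h r * ?h s)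
      = (\<lambda>s. ?E * ?v (s + r) - ?E * (q powi s * ?v (r - s)))"
  proof (rule lin_rec_unique[OF assms, where p = p and k = 0])
    show "?h 0 * ?h (0 + 1 + r) - ?h r * ?h (0 + 1)
        = ?E * ?v (0 + 1 + r) - ?E * (q powi (0 + 1) * ?v (r - (0 + 1)))"
      using horadamLucas_vajda_base_1[OF assms, of p a b r] by (simp add: algebra_simps)
  qed (intro lin_rec_lincomb lin_rec_shift lin_rec_reflect[OF assms] h v | simp)+
  from fun_cong[OF this, of s] show ?thesis by (simp add: algebra_simps)
qed

theorem mainTheorem9:
  fixes p q a b :: complex and n r s :: int
  assumes "q \<noteq> 0"
  shows "horadamLucas p q a b (n + s) * horadamLucas p q a b (n - r)
           - horadamLucas p q a b n * horadamLucas p q a b (n - r + s)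
         = (b^2 - a*b*p + a^2*q) * q powi (n - r) * (lucasV p q (r + s) - q powi s * lucasV p q (r - s))"
  using lin_rec_vajda[OF assms lin_rec_horadamLucas[OF assms], where n = n and r = r and s = s]
    horadamLucas_vajda_base[OF assms, of p a b r s]
  by (simp add: mult_ac)

end
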